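(* Let $f(z)=\sum_{n\ge1} f_n z^n$ be a formal power series over $\mathbb{C}$ with $f_1\neq 0$, and let $f'(z)$ be its formal derivative. The Riordan matrix $\left(\frac{z f'(z)}{f(z)}, f(z)\right)$ (an element of the Hitting time subgroup) is a pseudo-involution if and only if $-f(-f(z))=z$.
   Context: A Riordan matrix is a pair $(g(z),f(z))$ of formal power series over $\mathbb{C}$ with $g(z)=\sum_{n\ge 0} g_n z^n$, $g_0\neq 0$, and $f(z)=\sum_{n\ge 1} f_n z^n$ with $f_1\neq 0$; it represents the infinite lower-triangular matrix whose $k$-th column ($k\ge 0$) has generating function $g(z)f(z)^k$. Riordan matrices form a group under matrix multiplication, where $(g(z),f(z))*(h(z),l(z))=(g(z)h(f(z)),\,l(f(z)))$ and the identity is $(1,z)$. Let $M=(1,-z)$. A Riordan matrix $L$ is called a pseudo-involution if $(L*M)*(L*M)=(1,z)$. The quotient $z f'(z)/f(z)$ is the formal power series obtained by cancelling the factor $z$ (it has constant term $1$). *)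

theory Defs
  imports "HOL-Computational_Algebra.Formal_Power_Series"
begin

text \<open>A Riordan matrix is represented by its pair (g, f) of formal power series.\<close>

definition riordan_mult :: "complex fps \<times> complex fps \<Rightarrow> complex fps \<times> complex fps \<Rightarrow> complex fps \<times> complex fps" where
  "riordan_mult p q = (fst p * fps_compose (fst q) (snd p), fps_compose (snd q) (snd p))"

definition riordan_id :: "complex fps \<times> complex fps" where
  "riordan_id = (1, fps_X)"

definition riordan_M :: "complex fps \<times> complex fps" where
  "riordan_M = (1, - fps_X)"

definition pseudo_involution :: "complex fps \<times> complex fps \<Rightarrow> bool" where
  "pseudo_involution L \<longleftrightarrow>
     riordan_mult (riordan_mult L riordan_M) (riordan_mult L riordan_M) = riordan_id"

text \<open>z f'(z) / f(z), computed by cancelling the factor z: f'(z) / (f(z)/z).\<close>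
definition hitting_g :: "complex fps \<Rightarrow> complex fps" where
  "hitting_g f = fps_deriv f / fps_shift 1 f"

end

theory Submission
  imports Defs
begin

text \<open>Right multiplication by \<open>M = (1, -z)\<close> sends \<open>(g, f)\<close> to \<open>(g, -f)\<close>, so \<open>(g, f)\<close> is a
  pseudo-involution iff \<open>h = -f\<close> is a compositional involution and \<open>g \<cdot> (g \<circ> h) = 1\<close>.
  For an involution \<open>h\<close> both \<open>h'\<close> (chain rule) and \<open>h/z\<close> satisfy \<open>u \<cdot> (u \<circ> h) = 1\<close>,
  hence so does their quotient \<open>z h'/h\<close>, which is the same series for \<open>f\<close> and \<open>-f\<close>.\<close>

lemma fps_deriv_mult_compose_involution:
  fixes h :: "'a::idom fps"
  assumes "fps_nth h 0 = 0" and "h oo h = fps_X"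
  shows "fps_deriv h * (fps_deriv h oo h) = 1"
proof -
  have "fps_deriv (h oo h) = (fps_deriv h oo h) * fps_deriv h"
    using assms(1) by (rule fps_compose_deriv)
  then show ?thesis
    using assms(2) by (simp add: mult.commute)
qed

lemma fps_shift_mult_compose_involution:
  fixes h :: "'a::idom fps"
  assumes "fps_nth h 0 = 0" and "h oo h = fps_X"
  shows "fps_shift 1 h * (fps_shift 1 h oo h) = 1"
proof -
  define u where "u = fps_shift 1 h"
  have h_eq: "h = u * fps_X"
  proof (cases "h = 0")
    case False
    then have "1 \<le> subdegree h"
      using assms(1) by (intro subdegree_geI) auto
    then show ?thesis
      unfolding u_def by (rule fps_shift_times_fps_X[symmetric])
  qed (simp add: u_def)
  have "fps_X = (u oo h) * h"
    using assms by (metis h_eq fps_compose_mult_distrib fps_X_fps_compose_startby0)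
  then have "fps_X * 1 = fps_X * (u * (u oo h))"
    by (simp add: h_eq algebra_simps)
  then show ?thesis
    unfolding u_def by (simp add: fps_X_neq_zero)
qed

lemma hitting_g_mult_compose_involution:
  assumes "fps_nth h 0 = 0" and "h oo h = fps_X"
  shows "hitting_g h * (hitting_g h oo h) = 1"
proof -
  define u where "u = fps_shift 1 h"
  have u_inv: "u * (u oo h) = 1"
    unfolding u_def using assms by (rule fps_shift_mult_compose_involution)
  then have "fps_nth u 0 \<noteq> 0"
    by (metis fps_mult_nth_0 fps_compose_nth_0 one_neq_zero mult_zero_left fps_one_nth)
  then have "hitting_g h = fps_deriv h * inverse u"
    unfolding hitting_g_def u_def[symmetric] by (rule fps_divide_unit)
  then have g_u: "hitting_g h * u = fps_deriv h"
    using \<open>fps_nth u 0 \<noteq> 0\<close> by (simp add: mult.assoc inverse_mult_eq_1)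
  have "hitting_g h * (hitting_g h oo h) * (u * (u oo h))
      = fps_deriv h * (fps_deriv h oo h)"
    using assms(1) by (simp add: g_u[symmetric] fps_compose_mult_distrib algebra_simps)
  then show ?thesis
    using u_inv fps_deriv_mult_compose_involution[OF assms] by simp
qed

lemma hitting_g_uminus: "hitting_g (- f) = hitting_g f"
  by (simp add: hitting_g_def fps_shift_uminus)

lemma riordan_mult_riordan_M:
  assumes "fps_nth f 0 = 0"
  shows "riordan_mult (g, f) riordan_M = (g, - f)"
  using assms by (simp add: riordan_mult_def riordan_M_def fps_compose_uminus)

lemma pseudo_involution_iff:
  assumes "fps_nth f 0 = 0"
  shows "pseudo_involution (g, f) \<longleftrightarrow> g * (g oo - f) = 1 \<and> (- f) oo (- f) = fps_X"
  unfolding pseudo_involution_def riordan_mult_riordan_M[OF assms]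
  by (simp add: riordan_mult_def riordan_id_def)

theorem proposition19:
  fixes f :: "complex fps"
  assumes "fps_nth f 0 = 0" and "fps_nth f 1 \<noteq> 0"
  shows "pseudo_involution (hitting_g f, f) \<longleftrightarrow>
           - fps_compose f (- f) = fps_X"
proof -
  have involution_iff: "(- f) oo (- f) = fps_X \<longleftrightarrow> - fps_compose f (- f) = fps_X"
    by (simp add: fps_compose_uminus)
  have "hitting_g f * (hitting_g f oo - f) = 1" if "(- f) oo (- f) = fps_X"
    using hitting_g_mult_compose_involution[of "- f"] assms(1) that
    by (simp add: hitting_g_uminus)
  then show ?thesis
    using assms(1) involution_iff by (auto simp: pseudo_involution_iff)
qed

end
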